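(* The class $\mathcal W$ is contained in the class $\mathcal A$; i.e., every bounded directoid with unary operation satisfying (ii), (iii), (iv) and the identity (i') also satisfies condition (i). (Hence $\mathcal W$ is a variety contained in $\mathcal A$.)
   Context: A bounded directoid with unary operation is an algebra $(P,\sqcup,{}',0,1)$ of type $(2,1,0,0)$ satisfying $x\sqcup x=x$, $x\sqcup y=y\sqcup x$, $x\sqcup((x\sqcup y)\sqcup z)=(x\sqcup y)\sqcup z$, $x\sqcup 0=x$, $x\sqcup 1=1$. Its induced order is $x\leq y$ iff $x\sqcup y=y$ (a partial order with least element $0$ and greatest element $1$). Put $x\sqcap y:=(x'\sqcup y')'$. Conditions: (i) for all $x,y,z$: if $(x\sqcup z)\sqcup(((x'\sqcap w)\sqcap((x\sqcup y)\sqcap w))\sqcup z)=z$ for all $w\in P$, then $(x\sqcup y)\sqcup z=z$; (ii) $(x\sqcap y)\sqcup x\approx x$; (iii) $(x\sqcup y)\sqcup(x'\sqcup y)\approx 1$; (iv) $x''\approx x$; (i') $x\sqcup y\leq(x\sqcup z)\sqcup((x'\sqcap(x\sqcup y))\sqcup z)$, i.e. the identity $(x\sqcup y)\sqcup t\approx t$ where $t=(x\sqcup z)\sqcup((x'\sqcap(x\sqcup y))\sqcup z)$. $\mathcal A$ is the class of bounded directoids with unary operation satisfying (i)–(iv) (equivalently, the directoids assigned to generalized orthomodular posets); $\mathcal W$ is the variety of bounded directoids with unary operation satisfying (ii), (iii), (iv) and (i'). *)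

theory Defs
  imports Main
begin

text \<open>An algebra (P, join, comp, z, u) (0 = z, 1 = u) of type (2,1,0,0) is represented on a type 'a
  (the carrier is the whole type).\<close>

definition bounded_directoid_un ::
  "('a \<Rightarrow> 'a \<Rightarrow> 'a) \<Rightarrow> ('a \<Rightarrow> 'a) \<Rightarrow> 'a \<Rightarrow> 'a \<Rightarrow> bool" where
  "bounded_directoid_un j c z u \<longleftrightarrow>
     (\<forall>x. j x x = x) \<and>
     (\<forall>x y. j x y = j y x) \<and>
     (\<forall>x y w. j x (j (j x y) w) = j (j x y) w) \<and>
     (\<forall>x. j x z = x) \<and>
     (\<forall>x. j x u = u)"

definition dmeet :: "('a \<Rightarrow> 'a \<Rightarrow> 'a) \<Rightarrow> ('a \<Rightarrow> 'a) \<Rightarrow> 'a \<Rightarrow> 'a \<Rightarrow> 'a" where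
  "dmeet j c x y = c (j (c x) (c y))"

definition cond_i :: "('a \<Rightarrow> 'a \<Rightarrow> 'a) \<Rightarrow> ('a \<Rightarrow> 'a) \<Rightarrow> bool" where
  "cond_i j c \<longleftrightarrow> (\<forall>x y t.
     (\<forall>w. j (j x t) (j (dmeet j c (dmeet j c (c x) w) (dmeet j c (j x y) w)) t) = t)
       \<longrightarrow> j (j x y) t = t)"

definition cond_ii :: "('a \<Rightarrow> 'a \<Rightarrow> 'a) \<Rightarrow> ('a \<Rightarrow> 'a) \<Rightarrow> bool" where
  "cond_ii j c \<longleftrightarrow> (\<forall>x y. j (dmeet j c x y) x = x)"

definition cond_iii :: "('a \<Rightarrow> 'a \<Rightarrow> 'a) \<Rightarrow> ('a \<Rightarrow> 'a) \<Rightarrow> 'a \<Rightarrow> bool" where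
  "cond_iii j c u \<longleftrightarrow> (\<forall>x y. j (j x y) (j (c x) y) = u)"

definition cond_iv :: "('a \<Rightarrow> 'a) \<Rightarrow> bool" where
  "cond_iv c \<longleftrightarrow> (\<forall>x. c (c x) = x)"

definition cond_i' :: "('a \<Rightarrow> 'a \<Rightarrow> 'a) \<Rightarrow> ('a \<Rightarrow> 'a) \<Rightarrow> bool" where
  "cond_i' j c \<longleftrightarrow> (\<forall>x y t.
     j (j x y) (j (j x t) (j (dmeet j c (c x) (j x y)) t)) = j (j x t) (j (dmeet j c (c x) (j x y)) t))"

end

theory Submission
  imports Defs
begin

text \<open>Instantiating the universally quantified w in the premise of (i) with x \<squnion> y suffices:
  since x' \<sqinter> (x \<squnion> y) lies below x \<squnion> y, the meet (x' \<sqinter> w) \<sqinter> ((x \<squnion> y) \<sqinter> w) collapses to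
  x' \<sqinter> (x \<squnion> y), so the premise becomes exactly the upper bound of x \<squnion> y asserted by (i').
  The collapse only needs that a meet with a larger element is the smaller one, which follows
  from (ii) and (iv) because ' is an order-reversing involution.\<close>

lemma dmeet_commute:
  assumes "\<And>x y. j x y = j y x"
  shows "dmeet j c p q = dmeet j c q p"
  unfolding dmeet_def using assms by metis

lemma dmeet_idem:
  assumes "\<And>x. j x x = x" and "cond_iv c"
  shows "dmeet j c p p = p"
  using assms unfolding dmeet_def cond_iv_def by simp

lemma dmeet_le_right:
  assumes "\<And>x y. j x y = j y x" and "cond_ii j c"
  shows "j (dmeet j c p q) q = q"
  using assms unfolding cond_ii_def by (metis dmeet_commute)

lemma compl_antitone:
  assumes "cond_ii j c" and "cond_iv c" and "j b a = a"
  shows "j (c a) (c b) = c b"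
proof -
  have "dmeet j c (c b) (c a) = c a"
    using assms(2,3) unfolding dmeet_def cond_iv_def by simp
  then show ?thesis
    using assms(1) unfolding cond_ii_def by metis
qed

lemma dmeet_eq_left_if_le:
  assumes "\<And>x y. j x y = j y x" and "cond_ii j c" and "cond_iv c" and "j b a = a"
  shows "dmeet j c b a = b"
  using compl_antitone[OF assms(2-4)] assms(1,3)
  unfolding dmeet_def cond_iv_def by metis

lemma cond_i'_imp_cond_i:
  assumes idem: "\<And>x. j x x = x" and comm: "\<And>x y. j x y = j y x"
    and "cond_ii j c" and "cond_iv c" and "cond_i' j c"
  shows "cond_i j c"
  unfolding cond_i_def
proof (intro allI impI)
  fix x y t
  assume premise: "\<forall>w. j (j x t) (j (dmeet j c (dmeet j c (c x) w) (dmeet j c (j x y) w)) t) = t"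
  define b where "b = dmeet j c (c x) (j x y)"
  have "j b (j x y) = j x y"
    unfolding b_def using dmeet_le_right[OF comm assms(3)] .
  then have "dmeet j c b (j x y) = b"
    using dmeet_eq_left_if_le[OF comm assms(3,4)] by blast
  with premise[rule_format, of "j x y"] have "j (j x t) (j b t) = t"
    unfolding b_def using dmeet_idem[of j, OF idem assms(4)] by simp
  moreover have "j (j x y) (j (j x t) (j b t)) = j (j x t) (j b t)"
    using assms(5) unfolding cond_i'_def b_def by blast
  ultimately show "j (j x y) t = t" by simp
qed

theorem mainTheorem6:
  fixes j :: "'a \<Rightarrow> 'a \<Rightarrow> 'a" and c :: "'a \<Rightarrow> 'a" and z u :: 'a
  assumes "bounded_directoid_un j c z u"
    and "cond_ii j c" and "cond_iii j c u" and "cond_iv c" and "cond_i' j c"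
  shows "cond_i j c \<and> cond_ii j c \<and> cond_iii j c u \<and> cond_iv c"
proof -
  have "\<And>x. j x x = x" and "\<And>x y. j x y = j y x"
    using assms(1) unfolding bounded_directoid_un_def by auto
  then have "cond_i j c"
    using cond_i'_imp_cond_i assms(2,4,5) by blast
  with assms(2-4) show ?thesis by blast
qed

end
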